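(* Let $\mathcal{S}=\{c\in\mathbb{M}_2: 0\le c\le 1,\ \operatorname{trace}(c)=1,\ 0<\det(c)<\tfrac14\}$. Let $a=\begin{pmatrix} t&\alpha\\ \bar\alpha&1-t\end{pmatrix}$ and $b=\begin{pmatrix} x& y+iz\\ y-iz&1-x\end{pmatrix}$ be elements of $\mathcal{S}$ (with $t,x,y,z\in\mathbb{R}$, $\alpha\in\mathbb{C}$). Let $\lambda_1>\lambda_2$ be the eigenvalues of $a$, and set $\widetilde a=(t,\operatorname{Re}\alpha,\operatorname{Im}\alpha)$, $\widetilde{a'}=(1-t,-\operatorname{Re}\alpha,-\operatorname{Im}\alpha)$, $\widetilde{p_a}=\frac{1}{\lambda_1-\lambda_2}(t-\lambda_2,\operatorname{Re}\alpha,\operatorname{Im}\alpha)$, $\widetilde{p_a'}=\frac{1}{\lambda_1-\lambda_2}(\lambda_1-t,-\operatorname{Re}\alpha,-\operatorname{Im}\alpha)$, and $\mathcal{E}_a=\{v\in\mathbb{R}^3: d_2(v,\widetilde a)+d_2(v,\widetilde{a'})=1\}$, where $d_2$ is the Euclidean distance on $\mathbb{R}^3$. Then $a$ is absolutely compatible with $b$ if, and only if, the point $\widetilde b=(x,y,z)$ lies in $\mathcal{E}_a\setminus\{\widetilde{p_a},\widetilde{p_a'}\}$.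
   Context: $\mathbb{M}_2$ is the algebra of $2\times2$ complex matrices; $\operatorname{trace}$ is the non-normalized trace. For $x\in\mathbb{M}_2$, $|x|=(x^*x)^{1/2}$. Elements $0\le a,b\le 1$ are absolutely compatible if $|a-b|+|1-a-b|=1$. *)

theory Defs
  imports "HOL-Analysis.Analysis"
begin

text \<open>2x2 complex matrices are modelled as complex^2^2 (row i, column j: c$i$j).\<close>

definition adjoint2 :: "complex^2^2 \<Rightarrow> complex^2^2" where
  "adjoint2 c = (\<chi> i j. cnj (c$j$i))"

definition qform2 :: "complex^2^2 \<Rightarrow> complex^2 \<Rightarrow> complex" where
  "qform2 c v = (\<Sum>i\<in>UNIV. \<Sum>j\<in>UNIV. cnj (v$i) * c$i$j * v$j)"

definition psd2 :: "complex^2^2 \<Rightarrow> bool" where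
  "psd2 c \<longleftrightarrow> adjoint2 c = c \<and> (\<forall>v. Im (qform2 c v) = 0 \<and> 0 \<le> Re (qform2 c v))"

definition mabs2 :: "complex^2^2 \<Rightarrow> complex^2^2" where
  "mabs2 x = (THE r. psd2 r \<and> r ** r = adjoint2 x ** x)"

definition unit_interval2 :: "complex^2^2 \<Rightarrow> bool" where
  "unit_interval2 a \<longleftrightarrow> psd2 a \<and> psd2 (mat 1 - a)"

definition abs_compatible :: "complex^2^2 \<Rightarrow> complex^2^2 \<Rightarrow> bool" where
  "abs_compatible a b \<longleftrightarrow> mabs2 (a - b) + mabs2 (mat 1 - a - b) = mat 1"

definition S_set :: "(complex^2^2) set" where
  "S_set = {c. unit_interval2 c \<and> trace c = 1 \<and> Im (det c) = 0 \<and> 0 < Re (det c) \<and> Re (det c) < 1/4}"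

definition is_eigenvalue2 :: "complex^2^2 \<Rightarrow> complex \<Rightarrow> bool" where
  "is_eigenvalue2 c l \<longleftrightarrow> (\<exists>v. v \<noteq> 0 \<and> c *v v = l *s v)"

end

theory Submission
  imports Defs
begin

text \<open>A trace-one hermitian matrix [[t, \<alpha>], [cnj \<alpha>, 1 - t]] is determined by its Bloch
  coordinates (t, Re \<alpha>, Im \<alpha>) in R^3. For two such matrices a and b, both a - b and 1 - a - b
  are traceless hermitian, and a traceless hermitian matrix with coordinates w squares to the
  square of norm w times the identity, so its absolute value is norm w times the identity. Hence
  a and b are absolutely compatible exactly when the coordinates of b lie on the ellipsoid with
  foci those of a and 1 - a. The two excluded points are the coordinates of the spectral
  projections of a, which have determinant 0, whereas det b > 0.\<close>

lemma mat2_eq_iff: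
  "(A::'a^2^2) = B \<longleftrightarrow> A$1$1 = B$1$1 \<and> A$1$2 = B$1$2 \<and> A$2$1 = B$2$1 \<and> A$2$2 = B$2$2"
  by (auto simp: vec_eq_iff forall_2)

lemma matrix_matrix_mult_2_nth:
  "(A ** (B::'a::semiring_1^2^2))$i$j = A$i$1 * B$1$j + A$i$2 * B$2$j"
  by (simp add: matrix_matrix_mult_def sum_2)

lemma mat_nth: "(mat c :: 'a::zero^'n^'n)$i$j = (if i = j then c else 0)"
  by (simp add: mat_def)

lemma adjoint2_nth: "adjoint2 c $ i $ j = cnj (c$j$i)"
  by (simp add: adjoint2_def)

lemma qform2_expand:
  "qform2 c v = cnj (v$1) * c$1$1 * v$1 + cnj (v$1) * c$1$2 * v$2
              + cnj (v$2) * c$2$1 * v$1 + cnj (v$2) * c$2$2 * v$2"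
  by (simp add: qform2_def sum_2)

lemma psd2_entries:
  assumes "psd2 R"
  obtains u s where "R$1$1 = of_real u" "R$2$2 = of_real s" "R$2$1 = cnj (R$1$2)" "0 \<le> u" "0 \<le> s"
proof -
  have herm: "adjoint2 R = R" and Q: "\<And>v. 0 \<le> Re (qform2 R v)"
    using assms by (auto simp: psd2_def)
  have "R$1$1 \<in> \<real>" "R$2$2 \<in> \<real>" "R$2$1 = cnj (R$1$2)"
    using herm by (auto simp: mat2_eq_iff adjoint2_nth Reals_cnj_iff)
  moreover have "0 \<le> Re (R$1$1)" "0 \<le> Re (R$2$2)"
    using Q[of "vector [1, 0]"] Q[of "vector [0, 1]"] by (simp_all add: qform2_expand)
  ultimately show thesis
    using that[of "Re (R$1$1)" "Re (R$2$2)"] by (simp add: complex_is_Real_iff)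
qed

lemma psd2_offdiag_eq_0:
  assumes "psd2 R" "R$1$1 = 0" "R$2$2 = 0"
  shows "R$1$2 = 0"
proof -
  have "R$2$1 = cnj (R$1$2)" using psd2_entries[OF assms(1)] by metis
  moreover have "0 \<le> Re (qform2 R (vector [1, - cnj (R$1$2)]))"
    using assms(1) by (simp add: psd2_def)
  ultimately have "(Re (R$1$2))\<^sup>2 + (Im (R$1$2))\<^sup>2 \<le> 0"
    using assms(2,3) by (simp add: qform2_expand power2_eq_square)
  then show ?thesis by (simp add: complex_eq_iff sum_power2_le_zero_iff)
qed

lemma psd2_mat_of_real:
  assumes "0 \<le> r"
  shows "psd2 (mat (of_real r))"
proof -
  have "qform2 (mat (of_real r)) v = of_real r * (cnj (v$1) * v$1 + cnj (v$2) * v$2)" for v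
    by (simp add: qform2_expand mat_nth algebra_simps)
  then show ?thesis
    using assms by (simp add: psd2_def mat2_eq_iff adjoint2_nth mat_nth complex_mult_cnj)
qed

lemma psd2_sqrt_mat_unique:
  assumes "psd2 R" and "R ** R = mat (of_real c)"
  shows "R = mat (of_real (sqrt c))"
proof -
  obtain u s where r11: "R$1$1 = of_real u" and r22: "R$2$2 = of_real s"
      and r21: "R$2$1 = cnj (R$1$2)" and "0 \<le> u" "0 \<le> s"
    using psd2_entries[OF assms(1)] by metis
  define n where "n = (Re (R$1$2))\<^sup>2 + (Im (R$1$2))\<^sup>2"
  have "(R ** R)$1$1 = of_real (u\<^sup>2 + n)" "(R ** R)$2$2 = of_real (s\<^sup>2 + n)"
    "(R ** R)$1$2 = of_real (u + s) * R$1$2"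
    by (simp_all add: matrix_matrix_mult_2_nth r11 r22 r21 n_def
        complex_mult_cnj mult.commute[of "cnj _"] distrib_right power2_eq_square)
  then have c1: "u\<^sup>2 + n = c" and c2: "s\<^sup>2 + n = c" and c12: "of_real (u + s) * R$1$2 = 0"
    using assms(2) by (auto simp: mat_nth simp del: of_real_add of_real_power)
  have "u\<^sup>2 = s\<^sup>2" using c1 c2 by simp
  then have "u = s" using \<open>0 \<le> u\<close> \<open>0 \<le> s\<close> by (simp add: power2_eq_iff_nonneg)
  have "R$1$2 = 0"
  proof (cases "u = 0")
    case True
    then show ?thesis using psd2_offdiag_eq_0[OF assms(1)] r11 r22 \<open>u = s\<close> by simp
  next
    case False
    then show ?thesis using c12 \<open>u = s\<close> \<open>0 \<le> s\<close> by simp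
  qed
  then have "u = sqrt c" using c1 \<open>0 \<le> u\<close> by (auto simp: n_def)
  then show ?thesis
    using \<open>u = s\<close> \<open>R$1$2 = 0\<close> r11 r22 r21 by (simp add: mat2_eq_iff mat_nth)
qed

lemma mabs2_eq_mat_of_real:
  assumes "adjoint2 x ** x = mat (of_real c)" and "0 \<le> c"
  shows "mabs2 x = mat (of_real (sqrt c))"
  unfolding mabs2_def
proof (rule the_equality)
  show "psd2 (mat (of_real (sqrt c))) \<and>
        mat (of_real (sqrt c)) ** mat (of_real (sqrt c)) = adjoint2 x ** x"
    using assms by (simp add: psd2_mat_of_real mat2_eq_iff matrix_matrix_mult_2_nth mat_nth
        flip: of_real_mult)
qed (use assms psd2_sqrt_mat_unique in auto)

definition pauli2 :: "real^3 \<Rightarrow> complex^2^2" where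
  "pauli2 w = vector [vector [of_real (w$1), Complex (w$2) (w$3)],
                      vector [Complex (w$2) (- w$3), - of_real (w$1)]]"

definition bloch2 :: "real^3 \<Rightarrow> complex^2^2" where
  "bloch2 u = vector [vector [of_real (u$1), Complex (u$2) (u$3)],
                      vector [Complex (u$2) (- u$3), of_real (1 - u$1)]]"

lemma norm_vec3_power2: "(norm (w :: real^3))\<^sup>2 = (w$1)\<^sup>2 + (w$2)\<^sup>2 + (w$3)\<^sup>2"
  by (simp add: norm_vec_def L2_set_def sum_3)

lemma adjoint2_pauli2_mult_self: "adjoint2 (pauli2 w) ** pauli2 w = mat (of_real ((norm w)\<^sup>2))"
  unfolding norm_vec3_power2
  by (simp add: mat2_eq_iff matrix_matrix_mult_2_nth adjoint2_nth mat_nth pauli2_def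
      complex_eq_iff power2_eq_square algebra_simps)

lemma mabs2_pauli2: "mabs2 (pauli2 w) = mat (of_real (norm w))"
  using mabs2_eq_mat_of_real[OF adjoint2_pauli2_mult_self] by simp

lemma bloch2_diff: "bloch2 u - bloch2 v = pauli2 (u - v)"
  by (simp add: mat2_eq_iff bloch2_def pauli2_def complex_eq_iff)

lemma mat_1_diff_bloch2_diff: "mat 1 - bloch2 u - bloch2 v = pauli2 (vector [1, 0, 0] - u - v)"
  by (simp add: mat2_eq_iff bloch2_def pauli2_def mat_nth complex_eq_iff)

lemma mat_of_real_add_eq_mat_1_iff:
  "mat (of_real r) + mat (of_real s) = (mat 1 :: complex^2^2) \<longleftrightarrow> r + s = 1"
  by (simp add: mat2_eq_iff mat_nth flip: of_real_add)

lemma abs_compatible_bloch2_iff: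
  "abs_compatible (bloch2 u) (bloch2 v) \<longleftrightarrow> dist v u + dist v (vector [1, 0, 0] - u) = 1"
proof -
  have "dist v (vector [1, 0, 0] - u) = norm (vector [1, 0, 0] - u - v)"
    by (simp add: dist_norm norm_minus_commute algebra_simps)
  then show ?thesis
    by (simp add: abs_compatible_def bloch2_diff mat_1_diff_bloch2_diff mabs2_pauli2
        mat_of_real_add_eq_mat_1_iff dist_commute dist_norm)
qed

lemma det_bloch2: "det (bloch2 v) = of_real (v$1 * (1 - v$1) - (v$2)\<^sup>2 - (v$3)\<^sup>2)"
  by (simp add: det_2 bloch2_def complex_eq_iff power2_eq_square algebra_simps)

lemma is_eigenvalue2_det: "is_eigenvalue2 c l \<Longrightarrow> det (c - mat l) = 0"
proof -
  assume "is_eigenvalue2 c l"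
  then obtain v where "v \<noteq> 0" and "c *v v = l *s v"
    by (auto simp: is_eigenvalue2_def)
  moreover have "mat l *v v = l *s v"
    by (simp add: vec_eq_iff forall_2 matrix_vector_mult_def mat_def sum_2)
  ultimately have "\<not> invertible (c - mat l)"
    by (metis invertible_def matrix_left_invertible_ker matrix_vector_mult_diff_rdistrib right_minus_eq)
  then show ?thesis by (simp add: invertible_det_nz)
qed

lemma det_bloch2_sub_mat:
  "det (bloch2 u - mat (of_real l)) = of_real ((u$1 - l) * (1 - u$1 - l) - (u$2)\<^sup>2 - (u$3)\<^sup>2)"
  by (simp add: det_2 bloch2_def mat_nth complex_eq_iff power2_eq_square algebra_simps)

lemma distinct_roots_cross_product:
  fixes p m l1 l2 :: real
  assumes "l1 \<noteq> l2" "(p - l1) * (1 - p - l1) = m" "(p - l2) * (1 - p - l2) = m"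
  shows "(p - l2) * (l1 - p) = m"
proof -
  have "(l1 - l2) * (l1 + l2 - 1) = 0"
    using assms(2,3) by (simp add: algebra_simps)
  then have "l1 = 1 - l2" using assms(1) by simp
  then show ?thesis using assms(3) by (simp add: diff_diff_eq add.commute)
qed

lemma det_bloch2_scaleR_eq_0:
  assumes "0 < d" and "u * (d - u) = r\<^sup>2 + s\<^sup>2"
  shows "det (bloch2 ((1 / d) *\<^sub>R vector [u, r, s])) = 0"
proof -
  have "(u / d) * (1 - u / d) - (r / d)\<^sup>2 - (s / d)\<^sup>2 = (u * (d - u) - r\<^sup>2 - s\<^sup>2) / d\<^sup>2"
    using assms(1) by (simp add: field_simps power2_eq_square)
  then show ?thesis using assms(2) by (simp add: det_bloch2)
qed

theorem theorem3p7:
  fixes a b :: "complex^2^2" and t x y z l1 l2 :: real and \<alpha> :: complex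
  assumes ha: "a = vector [vector [complex_of_real t, \<alpha>], vector [cnj \<alpha>, complex_of_real (1 - t)]]"
    and hb: "b = vector [vector [complex_of_real x, Complex y z], vector [Complex y (- z), complex_of_real (1 - x)]]"
    and aS: "a \<in> S_set" and bS: "b \<in> S_set"
    and hl: "l1 > l2"
    and e1: "is_eigenvalue2 a (complex_of_real l1)"
    and e2: "is_eigenvalue2 a (complex_of_real l2)"
  shows "abs_compatible a b \<longleftrightarrow>
    (let ta = (vector [t, Re \<alpha>, Im \<alpha>] :: real^3);
         ta' = (vector [1 - t, - Re \<alpha>, - Im \<alpha>] :: real^3);
         pa = (1 / (l1 - l2)) *\<^sub>R (vector [t - l2, Re \<alpha>, Im \<alpha>] :: real^3);
         pa' = (1 / (l1 - l2)) *\<^sub>R (vector [l1 - t, - Re \<alpha>, - Im \<alpha>] :: real^3);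
         Ea = {v :: real^3. dist v ta + dist v ta' = 1}
     in (vector [x, y, z] :: real^3) \<in> Ea - {pa, pa'})"
proof -
  define ta where "ta = (vector [t, Re \<alpha>, Im \<alpha>] :: real^3)"
  have a: "a = bloch2 ta" and b: "b = bloch2 (vector [x, y, z])"
    by (simp_all add: ha hb ta_def bloch2_def mat2_eq_iff complex_eq_iff)
  have ta': "vector [1 - t, - Re \<alpha>, - Im \<alpha>] = vector [1, 0, 0] - ta"
    by (simp add: ta_def vec_eq_iff forall_3)
  have "(t - l) * (1 - t - l) = (Re \<alpha>)\<^sup>2 + (Im \<alpha>)\<^sup>2" if "is_eigenvalue2 a (of_real l)" for l
    using is_eigenvalue2_det[OF that] unfolding a det_bloch2_sub_mat of_real_eq_0_iff
    by (simp add: ta_def)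
  then have m: "(t - l2) * (l1 - t) = (Re \<alpha>)\<^sup>2 + (Im \<alpha>)\<^sup>2"
    using distinct_roots_cross_product hl e1 e2 by (metis order_less_irrefl)
  have "det (bloch2 (vector [x, y, z])) \<noteq> 0"
    using bS by (auto simp: S_set_def b)
  moreover have "det (bloch2 ((1 / (l1 - l2)) *\<^sub>R vector [t - l2, Re \<alpha>, Im \<alpha>])) = 0"
    "det (bloch2 ((1 / (l1 - l2)) *\<^sub>R vector [l1 - t, - Re \<alpha>, - Im \<alpha>])) = 0"
    using hl m by (auto intro!: det_bloch2_scaleR_eq_0 simp: algebra_simps)
  ultimately show ?thesis
    by (auto simp: Let_def abs_compatible_bloch2_iff a b ta' simp flip: ta_def)
qed

end
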